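(* Let $X$ be a topological space and let $(A_n)_{n\in\mathbb N}$ be subsets of $X$ (each with the subspace topology) such that $C(A_n)$ has the countable sup property for every $n$ and $\bigcup_{n=1}^\infty A_n$ is dense in $X$. Then $C(X)$ has the countable sup property.
   Context: $C(Y)$ denotes the vector lattice of all real-valued continuous functions on a space $Y$ with the pointwise order. A vector lattice has the countable sup property if every nonempty subset possessing a supremum contains a countable subset with the same supremum. *)

theory Defs
  imports "HOL-Analysis.Analysis"
begin

text \<open>Elements are represented extensionally: they vanish outside the
  carrier of Y, so that each element of C(Y) has exactly one representative.\<close>
definition Cfun :: "'a topology \<Rightarrow> ('a \<Rightarrow> real) set" where
  "Cfun Y = {f. continuous_map Y euclideanreal f \<and> (\<forall>x. x \<notin> topspace Y \<longrightarrow> f x = 0)}"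

definition Cle :: "'a topology \<Rightarrow> ('a \<Rightarrow> real) \<Rightarrow> ('a \<Rightarrow> real) \<Rightarrow> bool" where
  "Cle Y f g \<longleftrightarrow> (\<forall>x\<in>topspace Y. f x \<le> g x)"

definition is_Csup :: "'a topology \<Rightarrow> ('a \<Rightarrow> real) set \<Rightarrow> ('a \<Rightarrow> real) \<Rightarrow> bool" where
  "is_Csup Y S g \<longleftrightarrow> g \<in> Cfun Y \<and> (\<forall>f\<in>S. Cle Y f g)
     \<and> (\<forall>h\<in>Cfun Y. (\<forall>f\<in>S. Cle Y f h) \<longrightarrow> Cle Y g h)"

definition countable_sup_property :: "'a topology \<Rightarrow> bool" where
  "countable_sup_property Y \<longleftrightarrow>
     (\<forall>S g. S \<subseteq> Cfun Y \<and> S \<noteq> {} \<and> is_Csup Y S g \<longrightarrow>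
        (\<exists>T. T \<subseteq> S \<and> countable T \<and> is_Csup Y T g))"

end

theory Submission
  imports Defs
begin

text \<open>In C(X) the supremum is a local notion: an upper bound g \<in> C(X) of S is its supremum
  iff every nonempty cozero set contains a point where some f \<in> S exceeds g - \<epsilon>.
  Fix \<epsilon> = 1/(m+1).  In C(A n) the functions min 1 (k \<cdot> max 0 (f - g + \<epsilon>)), f \<in> S, k \<in> \<nat>,
  together with all 0 \<le> \<psi> \<le> 1 vanishing on every set {f > g - \<epsilon>}, have supremum 1; a
  countable subfamily with the same supremum involves countably many f whose sets
  {f > g - \<epsilon>} meet every cozero set of A n met by the whole family.  As \<Union>n. A n is
  dense, every cozero set of X on which some f \<in> S exceeds g - \<epsilon> meets some A n in such a
  cozero set, so the countably many f collected over all n and m have supremum g.\<close>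

definition zero_outside :: "'a topology \<Rightarrow> ('a \<Rightarrow> real) \<Rightarrow> 'a \<Rightarrow> real" where
  "zero_outside Y f = (\<lambda>x. if x \<in> topspace Y then f x else 0)"

lemma zero_outside_in_Cfun: "continuous_map Y euclideanreal f \<Longrightarrow> zero_outside Y f \<in> Cfun Y"
  unfolding Cfun_def zero_outside_def by (auto intro: continuous_map_eq)

definition sup_dense :: "'a topology \<Rightarrow> ('a \<Rightarrow> real) set \<Rightarrow> ('a \<Rightarrow> real) \<Rightarrow> bool" where
  "sup_dense Y S g \<longleftrightarrow> (\<forall>\<epsilon>>0. \<forall>\<rho>. continuous_map Y euclideanreal \<rho> \<longrightarrow> (\<exists>x\<in>topspace Y. 0 < \<rho> x)
      \<longrightarrow> (\<exists>f\<in>S. \<exists>x\<in>topspace Y. 0 < \<rho> x \<and> g x - \<epsilon> < f x))"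

lemma is_Csup_imp_sup_dense:
  assumes "is_Csup Y S g" shows "sup_dense Y S g"
  unfolding sup_dense_def
proof (intro allI impI)
  fix \<epsilon> :: real and \<rho>
  assume \<epsilon>: "\<epsilon> > 0" and \<rho>: "continuous_map Y euclideanreal \<rho>" and "\<exists>x\<in>topspace Y. 0 < \<rho> x"
  then obtain x0 where x0: "x0 \<in> topspace Y" "0 < \<rho> x0" by blast
  show "\<exists>f\<in>S. \<exists>x\<in>topspace Y. 0 < \<rho> x \<and> g x - \<epsilon> < f x"
  proof (rule ccontr)
    assume far: "\<not> ?thesis"
    have g: "g \<in> Cfun Y" "\<forall>f\<in>S. Cle Y f g"
      and least: "\<forall>h\<in>Cfun Y. (\<forall>f\<in>S. Cle Y f h) \<longrightarrow> Cle Y g h"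
      using assms unfolding is_Csup_def by auto
    define h where "h = zero_outside Y (\<lambda>x. g x - \<epsilon> * min 1 (max 0 (\<rho> x / \<rho> x0)))"
    have "continuous_map Y euclideanreal g" using g(1) unfolding Cfun_def by blast
    then have "h \<in> Cfun Y"
      unfolding h_def by (intro zero_outside_in_Cfun continuous_intros \<rho>) (use x0 in auto)
    moreover have "Cle Y f h" if f: "f \<in> S" for f
      unfolding Cle_def
    proof
      fix x assume x: "x \<in> topspace Y"
      have "f x \<le> g x" using g(2) f x unfolding Cle_def by auto
      moreover have "f x \<le> g x - \<epsilon>" if "0 < \<rho> x" using far f x that by force
      moreover have "\<epsilon> * min 1 (max 0 (\<rho> x / \<rho> x0)) \<le> \<epsilon>" using \<epsilon> by (simp add: mult_left_le)
      moreover have "\<rho> x / \<rho> x0 \<le> 0" if "\<not> 0 < \<rho> x" using x0 that by (simp add: divide_nonpos_pos)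
      ultimately show "f x \<le> h x"
        using x unfolding h_def zero_outside_def by (cases "0 < \<rho> x") auto
    qed
    ultimately have "g x0 \<le> h x0" using least x0 unfolding Cle_def by blast
    then show False using x0 \<epsilon> unfolding h_def zero_outside_def by simp
  qed
qed

lemma sup_dense_imp_is_Csup:
  assumes g: "g \<in> Cfun Y" and upper: "\<forall>f\<in>S. Cle Y f g" and dense: "sup_dense Y S g"
  shows "is_Csup Y S g"
  unfolding is_Csup_def
proof (intro conjI g upper ballI impI)
  fix h assume h: "h \<in> Cfun Y" and h_upper: "\<forall>f\<in>S. Cle Y f h"
  show "Cle Y g h" unfolding Cle_def
  proof (rule ballI, rule ccontr)
    fix x0 assume x0: "x0 \<in> topspace Y" and "\<not> g x0 \<le> h x0"
    define \<epsilon> where "\<epsilon> = (g x0 - h x0) / 2"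
    have "\<epsilon> > 0" "0 < g x0 - h x0 - \<epsilon>" using \<open>\<not> g x0 \<le> h x0\<close> unfolding \<epsilon>_def by simp_all
    moreover have "continuous_map Y euclideanreal (\<lambda>x. g x - h x - \<epsilon>)"
      using g h unfolding Cfun_def by (intro continuous_intros) auto
    ultimately obtain f x where "f \<in> S" "x \<in> topspace Y" "0 < g x - h x - \<epsilon>" "g x - \<epsilon> < f x"
      using dense x0 unfolding sup_dense_def by blast
    with h_upper show False unfolding Cle_def by force
  qed
qed

lemma is_Csup_iff_sup_dense:
  "is_Csup Y S g \<longleftrightarrow> g \<in> Cfun Y \<and> (\<forall>f\<in>S. Cle Y f g) \<and> sup_dense Y S g"
  by (metis is_Csup_def is_Csup_imp_sup_dense sup_dense_imp_is_Csup)

definition cozero_dense :: "'a topology \<Rightarrow> ('i \<Rightarrow> 'a \<Rightarrow> real) \<Rightarrow> 'i set \<Rightarrow> 'i set \<Rightarrow> bool" where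
  "cozero_dense Y p J I \<longleftrightarrow> (\<forall>\<rho>. continuous_map Y euclideanreal \<rho> \<longrightarrow>
     (\<exists>i\<in>I. \<exists>x\<in>topspace Y. 0 < \<rho> x \<and> 0 < p i x) \<longrightarrow> (\<exists>i\<in>J. \<exists>x\<in>topspace Y. 0 < \<rho> x \<and> 0 < p i x))"

definition cozero_ramp :: "'a topology \<Rightarrow> ('a \<Rightarrow> real) \<Rightarrow> nat \<Rightarrow> 'a \<Rightarrow> real" where
  "cozero_ramp Y p k = zero_outside Y (\<lambda>x. min 1 (real k * max 0 (p x)))"

definition cozero_annihilators :: "'a topology \<Rightarrow> ('i \<Rightarrow> 'a \<Rightarrow> real) \<Rightarrow> 'i set \<Rightarrow> ('a \<Rightarrow> real) set" where
  "cozero_annihilators Y p I = {\<psi> \<in> Cfun Y. \<forall>x\<in>topspace Y.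
     0 \<le> \<psi> x \<and> \<psi> x \<le> 1 \<and> (\<forall>i\<in>I. 0 < p i x \<longrightarrow> \<psi> x = 0)}"

lemma cozero_ramp_pos_imp: "0 < cozero_ramp Y p k x \<Longrightarrow> 0 < p x"
  unfolding cozero_ramp_def zero_outside_def by (auto split: if_splits simp: zero_less_mult_iff)

lemma is_Csup_cozero_ramps_annihilators:
  assumes p: "\<And>i. i \<in> I \<Longrightarrow> continuous_map Y euclideanreal (p i)"
  shows "is_Csup Y ((\<lambda>(i, k). cozero_ramp Y (p i) k) ` (I \<times> UNIV) \<union> cozero_annihilators Y p I)
                   (zero_outside Y (\<lambda>_. 1))"
    (is "is_Csup Y ?G ?one")
proof (rule sup_dense_imp_is_Csup)
  show "?one \<in> Cfun Y" by (intro zero_outside_in_Cfun) simp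
  show "\<forall>f\<in>?G. Cle Y f ?one"
    unfolding cozero_annihilators_def Cle_def cozero_ramp_def zero_outside_def by auto
  show "sup_dense Y ?G ?one"
    unfolding sup_dense_def
  proof (intro allI impI)
    fix \<epsilon> :: real and \<rho>
    assume \<epsilon>: "\<epsilon> > 0" and \<rho>: "continuous_map Y euclideanreal \<rho>" and "\<exists>x\<in>topspace Y. 0 < \<rho> x"
    then obtain x0 where x0: "x0 \<in> topspace Y" "0 < \<rho> x0" by blast
    show "\<exists>f\<in>?G. \<exists>x\<in>topspace Y. 0 < \<rho> x \<and> ?one x - \<epsilon> < f x"
    proof (cases "\<exists>i\<in>I. \<exists>x\<in>topspace Y. 0 < \<rho> x \<and> 0 < p i x")
      case True
      then obtain i x where ix: "i \<in> I" "x \<in> topspace Y" "0 < \<rho> x" "0 < p i x" by blast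
      define k where "k = nat \<lceil>1 / p i x\<rceil>"
      have "1 / p i x \<le> real k" unfolding k_def by linarith
      then have "1 \<le> real k * p i x" using ix(4) by (simp add: divide_le_eq)
      then have "?one x - \<epsilon> < cozero_ramp Y (p i) k x"
        using ix \<epsilon> unfolding cozero_ramp_def zero_outside_def by simp
      moreover have "cozero_ramp Y (p i) k \<in> ?G" using ix(1) by (intro UnI1 image_eqI[of _ _ "(i, k)"]) auto
      ultimately show ?thesis using ix by blast
    next
      case False
      define \<psi> where "\<psi> = zero_outside Y (\<lambda>x. max 0 (min 1 (\<rho> x / \<rho> x0)))"
      have "\<psi> \<in> Cfun Y" unfolding \<psi>_def by (intro zero_outside_in_Cfun continuous_intros \<rho>) (use x0 in auto)
      moreover have "\<psi> x = 0" if "x \<in> topspace Y" "i \<in> I" "0 < p i x" for i x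
        using False that x0 unfolding \<psi>_def zero_outside_def by (force simp: divide_nonpos_pos)
      ultimately have "\<psi> \<in> ?G" unfolding cozero_annihilators_def \<psi>_def zero_outside_def by auto
      moreover have "?one x0 - \<epsilon> < \<psi> x0" unfolding \<psi>_def zero_outside_def using x0 \<epsilon> by simp
      ultimately show ?thesis using x0 by blast
    qed
  qed
qed

lemma countable_sup_property_imp_countable_cozero_dense:
  assumes csp: "countable_sup_property Y"
    and p: "\<And>i. i \<in> I \<Longrightarrow> continuous_map Y euclideanreal (p i)"
  shows "\<exists>J\<subseteq>I. countable J \<and> cozero_dense Y p J I"
proof -
  let ?q = "\<lambda>(i, k). cozero_ramp Y (p i) k" and ?Z = "cozero_annihilators Y p I"
  have G_Cfun: "?q ` (I \<times> UNIV) \<union> ?Z \<subseteq> Cfun Y"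
    using p unfolding cozero_ramp_def cozero_annihilators_def
    by (auto intro!: zero_outside_in_Cfun continuous_intros)
  have "(\<lambda>_. 0) \<in> ?Z" unfolding cozero_annihilators_def Cfun_def by simp
  then have G_ne: "?q ` (I \<times> UNIV) \<union> ?Z \<noteq> {}" by (metis UnI2 empty_iff)
  from csp[unfolded countable_sup_property_def, rule_format,
      OF conjI[OF G_Cfun conjI[OF G_ne is_Csup_cozero_ramps_annihilators[OF p]]]]
  obtain T where T: "T \<subseteq> ?q ` (I \<times> UNIV) \<union> ?Z" "countable T"
    "is_Csup Y T (zero_outside Y (\<lambda>_. 1))"
    by blast
  have "countable (T \<inter> ?q ` (I \<times> UNIV)) \<and> T \<inter> ?q ` (I \<times> UNIV) \<subseteq> ?q ` (I \<times> UNIV)"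
    using T(2) by (simp add: countable_Int1)
  then obtain C where C: "countable C" "C \<subseteq> I \<times> UNIV" "T \<inter> ?q ` (I \<times> UNIV) = ?q ` C"
    unfolding countable_subset_image by (elim exE conjE) (rule that)
  have "cozero_dense Y p (fst ` C) I"
    unfolding cozero_dense_def
  proof (intro allI impI)
    fix \<rho> assume \<rho>: "continuous_map Y euclideanreal \<rho>"
      and "\<exists>i\<in>I. \<exists>x\<in>topspace Y. 0 < \<rho> x \<and> 0 < p i x"
    then obtain i x where ix: "i \<in> I" "x \<in> topspace Y" "0 < \<rho> x" "0 < p i x" by blast
    have "continuous_map Y euclideanreal (\<lambda>x. min (\<rho> x) (p i x))"
      using \<rho> p[OF ix(1)] by (intro continuous_intros)
    from is_Csup_imp_sup_dense[OF T(3), unfolded sup_dense_def, rule_format, OF zero_less_one this]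
    obtain t y where ty: "t \<in> T" "y \<in> topspace Y" "0 < \<rho> y" "0 < p i y" "0 < t y"
      using ix unfolding zero_outside_def by auto
    then have "t \<notin> ?Z" using ix(1) unfolding cozero_annihilators_def by force
    then have "t \<in> ?q ` C" using ty(1) T(1) C(3) by blast
    then obtain j k where "(j, k) \<in> C" "0 < p j y" using ty(5) cozero_ramp_pos_imp by fastforce
    then show "\<exists>j\<in>fst ` C. \<exists>x\<in>topspace Y. 0 < \<rho> x \<and> 0 < p j x"
      using ty(2,3) by force
  qed
  moreover have "fst ` C \<subseteq> I" "countable (fst ` C)" using C(1,2) by auto
  ultimately show ?thesis by blast
qed

lemma sup_dense_from_dense_subspaces:
  fixes \<delta> :: "nat \<Rightarrow> real"
  assumes dense: "X closure_of (\<Union>n. A n) = topspace X"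
    and cont: "\<And>f. f \<in> S \<Longrightarrow> continuous_map X euclideanreal f" "continuous_map X euclideanreal g"
    and S: "sup_dense X S g"
    and \<delta>: "\<And>m. 0 < \<delta> m" "\<And>\<epsilon>. 0 < \<epsilon> \<Longrightarrow> \<exists>m. \<delta> m < \<epsilon>"
    and J: "\<And>n m. cozero_dense (subtopology X (A n)) (\<lambda>f x. f x - g x + \<delta> m) (J n m) S"
  shows "sup_dense X (\<Union>n m. J n m) g"
  unfolding sup_dense_def
proof (intro allI impI)
  fix \<epsilon> :: real and \<rho>
  assume "\<epsilon> > 0" and \<rho>: "continuous_map X euclideanreal \<rho>" and "\<exists>x\<in>topspace X. 0 < \<rho> x"
  then obtain m where m: "\<delta> m < \<epsilon>" using \<delta>(2) by blast
  obtain f0 x1 where f0: "f0 \<in> S" "x1 \<in> topspace X" "0 < \<rho> x1" "g x1 - \<delta> m < f0 x1"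
    using S \<delta>(1) \<rho> \<open>\<exists>x\<in>topspace X. 0 < \<rho> x\<close> unfolding sup_dense_def by blast
  define U where "U = {x \<in> topspace X. min (\<rho> x) (f0 x - g x + \<delta> m) \<in> {0<..}}"
  have "openin X U"
    unfolding U_def using \<rho> cont f0(1)
    by (intro openin_continuous_map_preimage[where Y = euclideanreal] continuous_intros) auto
  moreover have "x1 \<in> U \<inter> X closure_of (\<Union>n. A n)" using f0 dense unfolding U_def by auto
  ultimately have "U \<inter> (\<Union>n. A n) \<noteq> {}" using openin_Int_closure_of_eq_empty by blast
  then obtain n x2 where x2: "x2 \<in> U" "x2 \<in> A n" by blast
  have "\<exists>f\<in>S. \<exists>x\<in>topspace (subtopology X (A n)). 0 < \<rho> x \<and> 0 < f x - g x + \<delta> m"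
    using x2 f0(1) unfolding U_def by (intro bexI[of _ f0] bexI[of _ x2]) auto
  from J[of n m, unfolded cozero_dense_def, rule_format, OF continuous_map_from_subtopology[OF \<rho>] this]
  obtain f x where "f \<in> J n m" "x \<in> topspace X" "0 < \<rho> x" "0 < f x - g x + \<delta> m" by auto
  then show "\<exists>f\<in>\<Union>n m. J n m. \<exists>x\<in>topspace X. 0 < \<rho> x \<and> g x - \<epsilon> < f x"
    using m by (intro bexI[of _ f] bexI[of _ x]) auto
qed

lemma countable_sup_dense_subset_from_dense_subspaces:
  fixes A :: "'i::countable \<Rightarrow> 'a set"
  assumes dense: "X closure_of (\<Union>n. A n) = topspace X"
    and csp: "\<And>n. countable_sup_property (subtopology X (A n))"
    and cont: "\<And>f. f \<in> S \<Longrightarrow> continuous_map X euclideanreal f" "continuous_map X euclideanreal g"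
    and S: "sup_dense X S g"
  shows "\<exists>T\<subseteq>S. countable T \<and> sup_dense X T g"
proof -
  define \<delta> where "\<delta> m = inverse (real (Suc m))" for m
  define good where "good n m J \<longleftrightarrow>
    J \<subseteq> S \<and> countable J \<and> cozero_dense (subtopology X (A n)) (\<lambda>f x. f x - g x + \<delta> m) J S" for n m J
  have "\<exists>J. good n m J" for n m
    unfolding good_def
  proof (rule countable_sup_property_imp_countable_cozero_dense[OF csp])
    show "continuous_map (subtopology X (A n)) euclideanreal (\<lambda>x. f x - g x + \<delta> m)" if "f \<in> S" for f
      using cont(1)[OF that] cont(2) by (intro continuous_map_from_subtopology continuous_intros)
  qed
  then obtain J where "good n m (J n m)" for n m by metis
  then have J: "\<And>n m. J n m \<subseteq> S" "\<And>n m. countable (J n m)"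
      "\<And>n m. cozero_dense (subtopology X (A n)) (\<lambda>f x. f x - g x + \<delta> m) (J n m) S"
    unfolding good_def by auto
  have "sup_dense X (\<Union>n m. J n m) g"
  proof (rule sup_dense_from_dense_subspaces[OF dense cont S _ _ J(3)])
    show "0 < \<delta> m" for m unfolding \<delta>_def by simp
    show "\<exists>m. \<delta> m < \<epsilon>" if "0 < \<epsilon>" for \<epsilon> unfolding \<delta>_def using reals_Archimedean[OF that] .
  qed
  then show ?thesis using J(1,2) by (intro exI[of _ "\<Union>n m. J n m"]) auto
qed

theorem proposition4p11:
  fixes X :: "'a topology" and A :: "nat \<Rightarrow> 'a set"
  assumes "\<And>n. A n \<subseteq> topspace X"
    and "\<And>n. countable_sup_property (subtopology X (A n))"
    and "X closure_of (\<Union>n. A n) = topspace X"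
  shows "countable_sup_property X"
  unfolding countable_sup_property_def
proof (intro allI impI, elim conjE)
  fix S g assume S: "S \<subseteq> Cfun X" and sup: "is_Csup X S g"
  then have g: "g \<in> Cfun X" "\<forall>f\<in>S. Cle X f g" "sup_dense X S g"
    unfolding is_Csup_iff_sup_dense by auto
  have "continuous_map X euclideanreal f" if "f \<in> S" for f using S that unfolding Cfun_def by auto
  moreover have "continuous_map X euclideanreal g" using g(1) unfolding Cfun_def by auto
  ultimately obtain T where T: "T \<subseteq> S" "countable T" "sup_dense X T g"
    using countable_sup_dense_subset_from_dense_subspaces[OF assms(3,2) _ _ g(3)] by blast
  then have "is_Csup X T g" using g(1,2) unfolding is_Csup_iff_sup_dense by blast
  with T(1,2) show "\<exists>T\<subseteq>S. countable T \<and> is_Csup X T g" by blast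
qed

end
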